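(* Let $(X_1,Y_1),\dots,(X_{n+m},Y_{n+m})$ be exchangeable with $Y_i\in\mathbb{R}$, $s:\mathcal{X}\to[0,1]$ a fixed score, $c\in\mathbb{R}$, and binary risk $L_i=\mathbf{1}\{Y_i\le c\}$. For $\gamma>0$ let $E'_{\gamma,n+j}=E_{\gamma,n+j}(1)$, $j=1,\dots,m$, and let $\mathcal{S}'$ be the output of the e-BH procedure at level $\alpha\in(0,1)$ applied to $\{E'_{\gamma,n+j}\}_{j=1}^m$. Then (i) $\mathcal{S}'$ satisfies $\mathbb{E}\big[\sum_{j\in\mathcal{S}'}L_{n+j}/(1\vee|\mathcal{S}'|)\big]\le\alpha$; (ii) if $\gamma=\alpha$, then $\mathcal{S}'=\mathcal{S}^{\mathrm{CS}}$.
   Context: Let $\mathcal{M}=\{s(X_i)\}_{i=1}^{n+m}$; $\mathrm{FR}_{n+j}(t;\ell)=\frac{\ell\mathbf{1}\{s(X_{n+j})\le t\}+\sum_{i=1}^nL_i\mathbf{1}\{s(X_i)\le t\}}{1+\sum_{k\ne j}\mathbf{1}\{s(X_{n+k})\le t\}}\cdot\frac{m}{n+1}$; $t_{\gamma,n+j}(\ell)=\max\{t\in\mathcal{M}:\mathrm{FR}_{n+j}(t;\ell)\le\gamma\}$ ($\max\emptyset=-\infty$); $E_{\gamma,n+j}(\ell)=\frac{(n+1)\mathbf{1}\{s(X_{n+j})\le t_{\gamma,n+j}(\ell)\}}{\ell\mathbf{1}\{s(X_{n+j})\le t_{\gamma,n+j}(\ell)\}+\sum_{i=1}^nL_i\mathbf{1}\{s(X_i)\le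 t_{\gamma,n+j}(\ell)\}}$ (ratio $0$ if numerator $0$, $+\infty$ if numerator positive and denominator $0$). The e-BH procedure at level $\alpha$ on $E_1,\dots,E_m$: $\hat\tau=\max\{\tau\in\{1,\dots,m\}:\sum_j\mathbf{1}\{E_j\ge m/(\alpha\tau)\}\ge\tau\}$ ($0$ if empty), selecting $\{j:E_j\ge m/(\alpha\hat\tau)\}$ (empty if $\hat\tau=0$). $\mathcal{S}^{\mathrm{CS}}$ is the Benjamini–Hochberg output at level $\alpha$ on the conformal p-values $p_j=\frac{1+\sum_{i=1}^n\mathbf{1}\{V(X_i,Y_i)\le V(X_{n+j},c)\}}{n+1}$, $V(x,y)=\infty\cdot\mathbf{1}\{y>c\}+s(x)$ (with $\infty\cdot0=0$). *)

theory Defs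
  imports "HOL-Probability.Probability"
begin

text \<open>Indices: calibration points are 1..n, test points are n+1..n+m.
  sc i = s(X_i) (scores), L i = risks.\<close>

definition FR :: "nat \<Rightarrow> nat \<Rightarrow> (nat \<Rightarrow> real) \<Rightarrow> (nat \<Rightarrow> real) \<Rightarrow> nat \<Rightarrow> real \<Rightarrow> real \<Rightarrow> real" where
  "FR n m sc L j t l =
     (l * of_bool (sc (n + j) \<le> t) + (\<Sum>i=1..n. L i * of_bool (sc i \<le> t)))
     / (1 + real (card {k \<in> {1..m}. k \<noteq> j \<and> sc (n + k) \<le> t}))
     * (real m / real (n + 1))"

definition tgam :: "nat \<Rightarrow> nat \<Rightarrow> (nat \<Rightarrow> real) \<Rightarrow> (nat \<Rightarrow> real) \<Rightarrow> real \<Rightarrow> nat \<Rightarrow> real \<Rightarrow> ereal" where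
  "tgam n m sc L \<gamma> j l =
     (let A = {t \<in> sc ` {1..n+m}. FR n m sc L j t l \<le> \<gamma>}
      in if A = {} then -\<infinity> else ereal (Max A))"

definition Eval :: "nat \<Rightarrow> nat \<Rightarrow> (nat \<Rightarrow> real) \<Rightarrow> (nat \<Rightarrow> real) \<Rightarrow> real \<Rightarrow> nat \<Rightarrow> real \<Rightarrow> ereal" where
  "Eval n m sc L \<gamma> j l =
     (let T = tgam n m sc L \<gamma> j l;
          num = real (n + 1) * of_bool (ereal (sc (n + j)) \<le> T);
          den = l * of_bool (ereal (sc (n + j)) \<le> T)
                + (\<Sum>i=1..n. L i * of_bool (ereal (sc i) \<le> T))
      in if num = 0 then 0 else if den = 0 then \<infinity> else ereal (num / den))"

definition eBH_tau :: "real \<Rightarrow> nat \<Rightarrow> (nat \<Rightarrow> ereal) \<Rightarrow> nat" where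
  "eBH_tau \<alpha> m E =
     (let A = {\<tau> \<in> {1..m}. card {j \<in> {1..m}. E j \<ge> ereal (real m / (\<alpha> * real \<tau>))} \<ge> \<tau>}
      in if A = {} then 0 else Max A)"

definition eBH :: "real \<Rightarrow> nat \<Rightarrow> (nat \<Rightarrow> ereal) \<Rightarrow> nat set" where
  "eBH \<alpha> m E =
     (let \<tau> = eBH_tau \<alpha> m E
      in if \<tau> = 0 then {} else {j \<in> {1..m}. E j \<ge> ereal (real m / (\<alpha> * real \<tau>))})"

definition BH_k :: "real \<Rightarrow> nat \<Rightarrow> (nat \<Rightarrow> real) \<Rightarrow> nat" where
  "BH_k \<alpha> m p =
     (let A = {k \<in> {1..m}. card {j \<in> {1..m}. p j \<le> \<alpha> * real k / real m} \<ge> k}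
      in if A = {} then 0 else Max A)"

definition BH :: "real \<Rightarrow> nat \<Rightarrow> (nat \<Rightarrow> real) \<Rightarrow> nat set" where
  "BH \<alpha> m p =
     (let k = BH_k \<alpha> m p
      in if k = 0 then {} else {j \<in> {1..m}. p j \<le> \<alpha> * real k / real m})"

text \<open>Nonconformity score V(x,y) = infinity * 1{y > c} + s(x), with infinity*0 = 0.\<close>
definition Vscore :: "('x \<Rightarrow> real) \<Rightarrow> real \<Rightarrow> 'x \<Rightarrow> real \<Rightarrow> ereal" where
  "Vscore s c x y = (if y > c then \<infinity> else ereal (s x))"

definition conf_pval :: "nat \<Rightarrow> ('x \<Rightarrow> real) \<Rightarrow> real \<Rightarrow> (nat \<Rightarrow> 'x) \<Rightarrow> (nat \<Rightarrow> real) \<Rightarrow> nat \<Rightarrow> real" where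
  "conf_pval n s c X Y j =
     (1 + real (card {i \<in> {1..n}. Vscore s c (X i) (Y i) \<le> Vscore s c (X (n + j)) c})) / real (n + 1)"

end

theory Submission
  imports Defs
begin

text \<open>
  (i) Pointwise, e-BH run on e-values E_j has false discovery proportion at most
  (alpha/m) sum_j L_{n+j} E_j. For a binary risk, L_{n+j} E'_{n+j} is n + 1 times the share
  of the test point n + j in the total risk of the points 1, ..., n, n + j that lie below
  the oracle threshold t_{gamma,n+j}(L_{n+j}). This threshold is a symmetric function of
  those n + 1 points, so by exchangeability their shares all have the same expectation; the
  shares sum to at most 1, hence each has expectation at most 1/(n + 1), and summing over j
  bounds the FDR by alpha.

  (ii) For l = 1 and t >= s(X_{n+j}) the ratio FR_{n+j}(t; 1) does not depend on j. So if
  T is the largest threshold feasible at level gamma and N(t) the calibration risk below t,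
  then E'_{n+j} = (n + 1)/(1 + N(T)) when s(X_{n+j}) <= T and 0 otherwise; for gamma = alpha,
  e-BH selects exactly those j with s(X_{n+j}) <= T. The conformal p-value equals
  (1 + N(s(X_{n+j})))/(n + 1), and BH on these p-values selects the same set.
\<close>

section \<open>The e-values at l = 1\<close>

definition calib_risk :: "nat \<Rightarrow> (nat \<Rightarrow> real) \<Rightarrow> (nat \<Rightarrow> real) \<Rightarrow> real \<Rightarrow> real" where
  "calib_risk n sc L t = (\<Sum>i=1..n. L i * of_bool (sc i \<le> t))"

definition test_count :: "nat \<Rightarrow> nat \<Rightarrow> (nat \<Rightarrow> real) \<Rightarrow> real \<Rightarrow> nat" where
  "test_count n m sc t = card {k \<in> {1..m}. sc (n + k) \<le> t}"

text \<open>For every \<open>j\<close> with \<open>sc (n + j) \<le> t\<close>, the condition on \<open>t\<close> is \<open>FR n m sc L j t 1 \<le> \<gamma>\<close>.\<close>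
definition feasible_set :: "nat \<Rightarrow> nat \<Rightarrow> (nat \<Rightarrow> real) \<Rightarrow> (nat \<Rightarrow> real) \<Rightarrow> real \<Rightarrow> real set" where
  "feasible_set n m sc L \<gamma> = {t \<in> sc ` {1..n+m}. 0 < test_count n m sc t \<and>
      (1 + calib_risk n sc L t) / real (test_count n m sc t) * (real m / real (n + 1)) \<le> \<gamma>}"

lemma one_plus_calib_risk_pos:
  assumes "\<And>i. 0 \<le> L i"
  shows "0 < 1 + calib_risk n sc L t"
proof -
  have "0 \<le> calib_risk n sc L t" unfolding calib_risk_def using assms by (intro sum_nonneg) auto
  then show ?thesis by simp
qed

lemma calib_risk_mono: "(\<And>i. 0 \<le> L i) \<Longrightarrow> t \<le> t' \<Longrightarrow> calib_risk n sc L t \<le> calib_risk n sc L t'"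
  unfolding calib_risk_def by (intro sum_mono) (auto intro: mult_left_mono)

lemma test_count_pos:
  assumes "j \<in> {1..m}" "sc (n + j) \<le> t"
  shows "0 < test_count n m sc t"
  unfolding test_count_def using assms by (subst card_gt_0_iff) auto

lemma FR_one_eq:
  assumes "j \<in> {1..m}" "sc (n + j) \<le> t"
  shows "FR n m sc L j t 1
    = (1 + calib_risk n sc L t) / real (test_count n m sc t) * (real m / real (n + 1))"
proof -
  have "{k \<in> {1..m}. sc (n + k) \<le> t} = insert j {k \<in> {1..m}. k \<noteq> j \<and> sc (n + k) \<le> t}"
    using assms by auto
  then have "real (test_count n m sc t) = 1 + real (card {k \<in> {1..m}. k \<noteq> j \<and> sc (n + k) \<le> t})"
    unfolding test_count_def by simp
  then show ?thesis unfolding FR_def calib_risk_def using assms(2) by simp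
qed

lemma feasible_set_finite: "finite (feasible_set n m sc L \<gamma>)"
  unfolding feasible_set_def by simp

lemma Max_eq_if_upper_parts_eq:
  fixes A B :: "'a::linorder set"
  assumes "finite A" "finite B" "{t \<in> A. x \<le> t} = {t \<in> B. x \<le> t}" "A \<noteq> {}" "x \<le> Max A"
  shows "B \<noteq> {} \<and> Max B = Max A"
proof -
  have "Max A \<in> B" using assms Max_in[of A] by blast
  then have B: "B \<noteq> {}" and "Max A \<le> Max B" using assms(2) by auto
  moreover have "Max B \<in> A" using assms B Max_in[of B] \<open>Max A \<le> Max B\<close> by fastforce
  ultimately show ?thesis using assms(1) by (simp add: antisym)
qed

lemma Eval_one_eq_tgam:
  assumes "\<And>i. 0 \<le> L i"
  shows "Eval n m sc L \<gamma> j 1 = (let T = tgam n m sc L \<gamma> j 1 in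
    ereal (if ereal (sc (n + j)) \<le> T
      then real (n + 1) / (1 + (\<Sum>i=1..n. L i * of_bool (ereal (sc i) \<le> T))) else 0))"
proof -
  define T where "T = tgam n m sc L \<gamma> j 1"
  have "0 \<le> (\<Sum>i=1..n. L i * of_bool (ereal (sc i) \<le> T))"
    using assms(1) by (intro sum_nonneg) auto
  then show ?thesis unfolding Eval_def Let_def T_def[symmetric] by (auto simp del: sum_mult_of_bool_eq)
qed

lemma Eval_one_nonneg_real:
  assumes "\<And>i. 0 \<le> L i"
  shows "Eval n m sc L \<gamma> j 1 = ereal (real_of_ereal (Eval n m sc L \<gamma> j 1))"
    "0 \<le> real_of_ereal (Eval n m sc L \<gamma> j 1)"
proof -
  define T where "T = tgam n m sc L \<gamma> j 1"
  have "0 \<le> (\<Sum>i=1..n. L i * of_bool (ereal (sc i) \<le> T))"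
    using assms by (intro sum_nonneg) auto
  then show "Eval n m sc L \<gamma> j 1 = ereal (real_of_ereal (Eval n m sc L \<gamma> j 1))"
    "0 \<le> real_of_ereal (Eval n m sc L \<gamma> j 1)"
    unfolding Eval_one_eq_tgam[of L, OF assms] Let_def T_def[symmetric] by (auto simp del: sum_mult_of_bool_eq)
qed

lemma Eval_one_eq:
  fixes n m j :: nat and sc L :: "nat \<Rightarrow> real" and \<gamma> :: real
  assumes j: "j \<in> {1..m}" and L: "\<And>i. 0 \<le> L i"
  defines "S \<equiv> feasible_set n m sc L \<gamma>"
  shows "Eval n m sc L \<gamma> j 1 = (if S \<noteq> {} \<and> sc (n + j) \<le> Max S
    then ereal (real (n + 1) / (1 + calib_risk n sc L (Max S))) else 0)"
proof -
  define A where "A = {t \<in> sc ` {1..n+m}. FR n m sc L j t 1 \<le> \<gamma>}"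
  have fin: "finite A" "finite S" unfolding A_def S_def feasible_set_def by auto
  have upper: "{t \<in> A. sc (n + j) \<le> t} = {t \<in> S. sc (n + j) \<le> t}"
    unfolding A_def S_def feasible_set_def using FR_one_eq[OF j] test_count_pos[OF j] by auto
  have tgam: "tgam n m sc L \<gamma> j 1 = (if A = {} then -\<infinity> else ereal (Max A))"
    unfolding tgam_def A_def Let_def by simp
  show ?thesis
  proof (cases "A \<noteq> {} \<and> sc (n + j) \<le> Max A")
    case True
    then have "S \<noteq> {} \<and> Max S = Max A"
      using Max_eq_if_upper_parts_eq[OF fin upper] by blast
    with True show ?thesis
      unfolding Eval_one_eq_tgam[OF L] tgam calib_risk_def Let_def by simp
  next
    case False
    then have "\<not> (S \<noteq> {} \<and> sc (n + j) \<le> Max S)"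
      using Max_eq_if_upper_parts_eq[OF fin(2,1) upper[symmetric]] by metis
    with False show ?thesis
      unfolding Eval_one_eq_tgam[OF L] tgam Let_def by auto
  qed
qed

section \<open>e-BH and BH select the same set\<close>

lemma eBH_eqI:
  assumes Q: "Q \<subseteq> {1..m}"
    and sel: "\<And>j. j \<in> Q \<Longrightarrow> ereal (real m / (\<alpha> * real (card Q))) \<le> E j"
    and only: "\<And>\<tau>. \<tau> \<in> {1..m} \<Longrightarrow> {j \<in> {1..m}. ereal (real m / (\<alpha> * real \<tau>)) \<le> E j} \<subseteq> Q"
  shows "eBH \<alpha> m E = Q"
proof -
  define R where "R \<tau> = {j \<in> {1..m}. ereal (real m / (\<alpha> * real \<tau>)) \<le> E j}" for \<tau>
  define A where "A = {\<tau> \<in> {1..m}. \<tau> \<le> card (R \<tau>)}"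
  have card_R: "card (R \<tau>) \<le> card Q" if "\<tau> \<in> {1..m}" for \<tau>
    using only[OF that] Q unfolding R_def by (intro card_mono) (auto intro: finite_subset)
  show ?thesis
  proof (cases "Q = {}")
    case True
    then have "A = {}" using card_R unfolding A_def by force
    then show ?thesis using True unfolding eBH_def eBH_tau_def Let_def A_def R_def by simp
  next
    case False
    then have cQ: "card Q \<in> {1..m}"
      using Q card_mono[OF _ Q] by (auto simp: card_gt_0_iff finite_subset Suc_le_eq)
    have RQ: "R (card Q) = Q" using only[OF cQ] sel Q unfolding R_def by blast
    have "Max A = card Q"
      using cQ RQ card_R by (intro Max_eqI) (auto simp: A_def intro: le_trans)
    moreover have "card Q \<in> A" using cQ RQ by (simp add: A_def)
    ultimately have "eBH_tau \<alpha> m E = card Q"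
      unfolding eBH_tau_def Let_def A_def[symmetric] R_def[symmetric] by auto
    then show ?thesis using cQ RQ unfolding eBH_def Let_def R_def by simp
  qed
qed

lemma BH_eqI:
  assumes Q: "Q \<subseteq> {1..m}" and \<alpha>: "0 \<le> \<alpha>"
    and sel: "\<And>j. j \<in> Q \<Longrightarrow> p j \<le> \<alpha> * real (card Q) / real m"
    and only: "\<And>k. k \<in> {1..m} \<Longrightarrow> k \<le> card {j \<in> {1..m}. p j \<le> \<alpha> * real k / real m} \<Longrightarrow>
      {j \<in> {1..m}. p j \<le> \<alpha> * real k / real m} \<subseteq> Q"
  shows "BH \<alpha> m p = Q"
proof -
  define R where "R k = {j \<in> {1..m}. p j \<le> \<alpha> * real k / real m}" for k
  define A where "A = {k \<in> {1..m}. k \<le> card (R k)}"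
  have RQ: "R k \<subseteq> Q" if "k \<in> A" for k using that only unfolding A_def R_def by blast
  have "finite A" unfolding A_def by simp
  show ?thesis
  proof (cases "Q = {}")
    case True
    then have "A = {}" using RQ unfolding A_def by fastforce
    then show ?thesis using True unfolding BH_def BH_k_def Let_def A_def R_def by simp
  next
    case False
    then have cQ: "card Q \<in> {1..m}"
      using Q card_mono[OF _ Q] by (auto simp: card_gt_0_iff finite_subset Suc_le_eq)
    have Q_R: "Q \<subseteq> R (card Q)" using sel Q unfolding R_def by auto
    then have "card Q \<le> card (R (card Q))" by (intro card_mono) (auto simp: R_def)
    then have "card Q \<in> A" using cQ by (simp add: A_def)
    define k where "k = Max A"
    have kA: "k \<in> A" and Qk: "card Q \<le> k"
      using \<open>finite A\<close> \<open>card Q \<in> A\<close> unfolding k_def by (auto intro: Max_in)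
    have "\<alpha> * real (card Q) / real m \<le> \<alpha> * real k / real m"
      using Qk \<alpha> by (intro divide_right_mono mult_left_mono) auto
    then have "R (card Q) \<subseteq> R k" unfolding R_def by auto
    then have "R k = Q" using RQ[OF kA] Q_R by blast
    moreover have "BH_k \<alpha> m p = k"
      using kA unfolding BH_k_def Let_def A_def[symmetric] R_def[symmetric] k_def by auto
    ultimately show ?thesis using kA unfolding BH_def Let_def R_def A_def by auto
  qed
qed

lemma mem_feasible_set_iff:
  "t \<in> feasible_set n m sc L \<gamma> \<longleftrightarrow> t \<in> sc ` {1..n+m} \<and> 0 < test_count n m sc t \<and>
    (1 + calib_risk n sc L t) * real m \<le> \<gamma> * real (test_count n m sc t) * real (n + 1)"
proof -
  have "x / real R * (real m / real (n + 1)) \<le> \<gamma> \<longleftrightarrow> x * real m \<le> \<gamma> * real R * real (n + 1)"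
    if "0 < R" for x and R :: nat
  proof -
    have "x / real R * (real m / real (n + 1)) = x * real m / (real R * real (n + 1))" by simp
    then show ?thesis using that by (simp add: pos_divide_le_eq mult.assoc)
  qed
  then show ?thesis unfolding feasible_set_def by auto
qed

lemma Max_feasible_set:
  assumes "feasible_set n m sc L \<gamma> \<noteq> {}"
  defines "T \<equiv> Max (feasible_set n m sc L \<gamma>)"
  shows "0 < card {j \<in> {1..m}. sc (n + j) \<le> T}"
    "(1 + calib_risk n sc L T) * real m \<le> \<gamma> * real (card {j \<in> {1..m}. sc (n + j) \<le> T}) * real (n + 1)"
proof -
  have "T \<in> feasible_set n m sc L \<gamma>" unfolding T_def using assms(1) feasible_set_finite by simp
  then show "0 < card {j \<in> {1..m}. sc (n + j) \<le> T}"
    "(1 + calib_risk n sc L T) * real m \<le> \<gamma> * real (card {j \<in> {1..m}. sc (n + j) \<le> T}) * real (n + 1)"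
    unfolding mem_feasible_set_iff test_count_def by auto
qed

lemma eBH_Eval_one_eq:
  fixes n m :: nat and sc L :: "nat \<Rightarrow> real" and \<alpha> :: real
  assumes L: "\<And>i. 0 \<le> L i" and \<alpha>: "0 < \<alpha>"
  defines "S \<equiv> feasible_set n m sc L \<alpha>"
  shows "eBH \<alpha> m (\<lambda>j. Eval n m sc L \<alpha> j 1) = {j \<in> {1..m}. S \<noteq> {} \<and> sc (n + j) \<le> Max S}"
    (is "_ = ?Q")
proof (rule eBH_eqI)
  have E: "Eval n m sc L \<alpha> j 1 = (if j \<in> ?Q then ereal (real (n + 1) / (1 + calib_risk n sc L (Max S))) else 0)"
    if "j \<in> {1..m}" for j
    using Eval_one_eq[OF that L] that unfolding S_def by simp
  show "?Q \<subseteq> {1..m}" by auto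
  show "{j \<in> {1..m}. ereal (real m / (\<alpha> * real \<tau>)) \<le> Eval n m sc L \<alpha> j 1} \<subseteq> ?Q"
    if "\<tau> \<in> {1..m}" for \<tau>
  proof -
    have "0 < real m / (\<alpha> * real \<tau>)" using that \<alpha> by simp
    then show ?thesis using E by (auto split: if_splits)
  qed
  show "ereal (real m / (\<alpha> * real (card ?Q))) \<le> Eval n m sc L \<alpha> j 1" if j: "j \<in> ?Q" for j
  proof -
    have "S \<noteq> {}" using j by simp
    then have "0 < card ?Q" "(1 + calib_risk n sc L (Max S)) * real m \<le> \<alpha> * real (card ?Q) * real (n + 1)"
      using Max_feasible_set[of n m sc L \<alpha>] unfolding S_def by simp_all
    moreover have "0 < 1 + calib_risk n sc L (Max S)" using one_plus_calib_risk_pos[of L, OF L] .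
    ultimately have "real m / (\<alpha> * real (card ?Q)) \<le> real (n + 1) / (1 + calib_risk n sc L (Max S))"
      using \<alpha> by (simp add: field_simps)
    then show ?thesis using E j by simp
  qed
qed

lemma BH_calib_pval_eq:
  fixes n m :: nat and sc L :: "nat \<Rightarrow> real" and \<alpha> :: real
  assumes L: "\<And>i. 0 \<le> L i" and \<alpha>: "0 \<le> \<alpha>"
  defines "S \<equiv> feasible_set n m sc L \<alpha>"
  shows "BH \<alpha> m (\<lambda>j. (1 + calib_risk n sc L (sc (n + j))) / real (n + 1))
    = {j \<in> {1..m}. S \<noteq> {} \<and> sc (n + j) \<le> Max S}"
    (is "BH \<alpha> m ?p = ?Q")
proof (rule BH_eqI[OF _ \<alpha>])
  show "?Q \<subseteq> {1..m}" by auto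
  show "?p j \<le> \<alpha> * real (card ?Q) / real m" if j: "j \<in> ?Q" for j
  proof -
    have "S \<noteq> {}" using j by simp
    then have "(1 + calib_risk n sc L (Max S)) * real m \<le> \<alpha> * real (card ?Q) * real (n + 1)"
      using Max_feasible_set(2)[of n m sc L \<alpha>] unfolding S_def by simp
    moreover have "0 < m" using j by auto
    ultimately have "(1 + calib_risk n sc L (Max S)) / real (n + 1) \<le> \<alpha> * real (card ?Q) / real m"
      by (simp add: field_simps)
    moreover have "?p j \<le> (1 + calib_risk n sc L (Max S)) / real (n + 1)"
      using j calib_risk_mono[of L, OF L] by (intro divide_right_mono) auto
    ultimately show ?thesis by linarith
  qed
  show "{j \<in> {1..m}. ?p j \<le> \<alpha> * real k / real m} \<subseteq> ?Q"
    if k: "k \<in> {1..m}" and card_k: "k \<le> card {j \<in> {1..m}. ?p j \<le> \<alpha> * real k / real m}" for k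
  proof -
    define R where "R = {j \<in> {1..m}. ?p j \<le> \<alpha> * real k / real m}"
    have "R \<noteq> {}" using k card_k unfolding R_def[symmetric] by auto
    define t0 where "t0 = Max ((\<lambda>j. sc (n + j)) ` R)"
    have "t0 \<in> (\<lambda>j. sc (n + j)) ` R"
      unfolding t0_def using \<open>R \<noteq> {}\<close> by (intro Max_in) (auto simp: R_def)
    then obtain j0 where j0: "j0 \<in> R" "t0 = sc (n + j0)" by auto
    have below_t0: "sc (n + j) \<le> t0" if "j \<in> R" for j
      unfolding t0_def using that by (intro Max_ge) (auto simp: R_def)
    then have "card R \<le> test_count n m sc t0"
      unfolding test_count_def by (intro card_mono) (auto simp: R_def)
    then have k_le: "k \<le> test_count n m sc t0" using card_k unfolding R_def by simp
    have "(1 + calib_risk n sc L t0) * real m \<le> \<alpha> * real k * real (n + 1)"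
      using j0 k by (simp add: R_def field_simps)
    also have "\<dots> \<le> \<alpha> * real (test_count n m sc t0) * real (n + 1)"
      using k_le \<alpha> by (intro mult_right_mono mult_left_mono) auto
    finally have "t0 \<in> S"
      unfolding S_def mem_feasible_set_iff using j0 k k_le by (auto simp: R_def)
    then have "t0 \<le> Max S" using feasible_set_finite unfolding S_def by auto
    then show ?thesis using below_t0 \<open>t0 \<in> S\<close> unfolding R_def by force
  qed
qed

lemma conf_pval_eq:
  "conf_pval n s c X Y j
    = (1 + calib_risk n (\<lambda>i. s (X i)) (\<lambda>i. of_bool (Y i \<le> c)) (s (X (n + j)))) / real (n + 1)"
proof -
  have "{i \<in> {1..n}. Vscore s c (X i) (Y i) \<le> Vscore s c (X (n + j)) c}
      = {1..n} \<inter> {i. Y i \<le> c \<and> s (X i) \<le> s (X (n + j))}"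
    unfolding Vscore_def by (auto simp: not_less)
  then show ?thesis
    unfolding conf_pval_def calib_risk_def by (simp add: of_bool_conj Int_def conj_ac)
qed

section \<open>Oracle shares\<close>

text \<open>The threshold uses the oracle level \<open>L (n + j)\<close>, at which \<open>FR\<close> treats the points
  \<open>insert (n + j) {1..n}\<close> symmetrically (lemma \<open>FR_at_oracle_risk\<close>).\<close>
definition oracle_share :: "nat \<Rightarrow> nat \<Rightarrow> (nat \<Rightarrow> real) \<Rightarrow> (nat \<Rightarrow> real) \<Rightarrow> real \<Rightarrow> nat \<Rightarrow> nat \<Rightarrow> real" where
  "oracle_share n m sc L \<gamma> j k =
     (let T = tgam n m sc L \<gamma> j (L (n + j))
      in L k * of_bool (ereal (sc k) \<le> T)
         / (\<Sum>a\<in>insert (n + j) {1..n}. L a * of_bool (ereal (sc a) \<le> T)))"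

lemma oracle_share_bounds:
  assumes "\<And>i. 0 \<le> L i" "k \<in> insert (n + j) {1..n}"
  shows "0 \<le> oracle_share n m sc L \<gamma> j k" "oracle_share n m sc L \<gamma> j k \<le> 1"
proof -
  define f where "f a = L a * of_bool (ereal (sc a) \<le> tgam n m sc L \<gamma> j (L (n + j)))" for a
  have f: "0 \<le> f a" for a unfolding f_def using assms(1) by simp
  have share: "oracle_share n m sc L \<gamma> j k = f k / sum f (insert (n + j) {1..n})"
    unfolding oracle_share_def f_def Let_def ..
  have "f k \<le> sum f (insert (n + j) {1..n})" using assms(2) f by (intro member_le_sum) auto
  moreover have "0 \<le> sum f (insert (n + j) {1..n})" using f by (intro sum_nonneg)
  ultimately show "0 \<le> oracle_share n m sc L \<gamma> j k" "oracle_share n m sc L \<gamma> j k \<le> 1"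
    unfolding share using f by (auto simp: divide_le_eq_1)
qed

lemma sum_oracle_share_le_1:
  "(\<Sum>k\<in>insert (n + j) {1..n}. oracle_share n m sc L \<gamma> j k) \<le> 1"
proof -
  define f where "f a = L a * of_bool (ereal (sc a) \<le> tgam n m sc L \<gamma> j (L (n + j)))" for a
  have "(\<Sum>k\<in>insert (n + j) {1..n}. oracle_share n m sc L \<gamma> j k)
      = sum f (insert (n + j) {1..n}) / sum f (insert (n + j) {1..n})"
    unfolding oracle_share_def f_def Let_def sum_divide_distrib ..
  then show ?thesis by simp
qed

lemma risk_mult_Eval_one:
  assumes L: "\<And>i. 0 \<le> L i" and L01: "L (n + j) \<in> {0, 1}" and j: "1 \<le> j"
  shows "L (n + j) * real_of_ereal (Eval n m sc L \<gamma> j 1)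
    = real (n + 1) * oracle_share n m sc L \<gamma> j (n + j)"
proof (cases "L (n + j) = 0")
  case True
  then show ?thesis unfolding oracle_share_def Let_def by simp
next
  case False
  then have L1: "L (n + j) = 1" using L01 by auto
  define T where "T = tgam n m sc L \<gamma> j 1"
  define N where "N = (\<Sum>i=1..n. L i * of_bool (ereal (sc i) \<le> T))"
  have "0 \<le> N" unfolding N_def using L by (intro sum_nonneg) auto
  moreover have "(\<Sum>a\<in>insert (n + j) {1..n}. L a * of_bool (ereal (sc a) \<le> T))
      = of_bool (ereal (sc (n + j)) \<le> T) + N"
    using j L1 unfolding N_def by (simp del: sum_mult_of_bool_eq)
  ultimately show ?thesis
    unfolding Eval_one_eq_tgam[of L, OF L] oracle_share_def Let_def L1 T_def[symmetric] N_def[symmetric]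
    by auto
qed

lemma sum_permutes_cong:
  assumes "\<pi> permutes D" "\<And>a. a \<in> D \<Longrightarrow> g' a = g (\<pi> a)"
  shows "sum g' D = sum g D"
  using sum.permute[OF assms(1), of g] assms(2) by (simp add: comp_def)

lemma FR_at_oracle_risk:
  assumes "1 \<le> j"
  shows "FR n m sc L j t (L (n + j))
    = (\<Sum>a\<in>insert (n + j) {1..n}. L a * of_bool (sc a \<le> t))
      / (1 + real (card {k \<in> {1..m}. k \<noteq> j \<and> sc (n + k) \<le> t})) * (real m / real (n + 1))"
  unfolding FR_def using assms by (simp del: sum_mult_of_bool_eq)

lemma tgam_oracle_permute:
  assumes j: "j \<in> {1..m}" and \<pi>: "\<pi> permutes insert (n + j) {1..n}"
    and sc': "\<And>i. i \<in> {1..n+m} \<Longrightarrow> sc' i = sc (\<pi> i)"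
    and L': "\<And>i. i \<in> {1..n+m} \<Longrightarrow> L' i = L (\<pi> i)"
  shows "tgam n m sc' L' \<gamma> j (L' (n + j)) = tgam n m sc L \<gamma> j (L (n + j))"
proof -
  have D: "insert (n + j) {1..n} \<subseteq> {1..n+m}" using j by auto
  have "sc' ` {1..n+m} = sc ` \<pi> ` {1..n+m}" using sc' by (auto simp: image_iff)
  then have image: "sc' ` {1..n+m} = sc ` {1..n+m}"
    using permutes_image[OF permutes_subset[OF \<pi> D]] by simp
  have "FR n m sc' L' j t (L' (n + j)) = FR n m sc L j t (L (n + j))" for t
  proof -
    have "(\<Sum>a\<in>insert (n + j) {1..n}. L' a * of_bool (sc' a \<le> t))
        = (\<Sum>a\<in>insert (n + j) {1..n}. L a * of_bool (sc a \<le> t))"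
      using D sc' L' by (intro sum_permutes_cong[OF \<pi>]) auto
    moreover have "\<pi> (n + k) = n + k" if "k \<in> {1..m}" "k \<noteq> j" for k
      using that by (intro permutes_not_in[OF \<pi>]) auto
    then have "{k \<in> {1..m}. k \<noteq> j \<and> sc' (n + k) \<le> t} = {k \<in> {1..m}. k \<noteq> j \<and> sc (n + k) \<le> t}"
      using sc' by auto
    ultimately show ?thesis using j by (simp add: FR_at_oracle_risk)
  qed
  then show ?thesis unfolding tgam_def image by simp
qed

lemma oracle_share_permute:
  assumes j: "j \<in> {1..m}" and \<pi>: "\<pi> permutes insert (n + j) {1..n}"
    and sc': "\<And>i. i \<in> {1..n+m} \<Longrightarrow> sc' i = sc (\<pi> i)"
    and L': "\<And>i. i \<in> {1..n+m} \<Longrightarrow> L' i = L (\<pi> i)"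
    and k: "k \<in> {1..n+m}"
  shows "oracle_share n m sc' L' \<gamma> j k = oracle_share n m sc L \<gamma> j (\<pi> k)"
proof -
  define T where "T = tgam n m sc L \<gamma> j (L (n + j))"
  have T: "tgam n m sc' L' \<gamma> j (L' (n + j)) = T"
    unfolding T_def using tgam_oracle_permute[of j m \<pi> n sc' sc L' L, OF j \<pi> sc' L'] .
  have "(\<Sum>a\<in>insert (n + j) {1..n}. L' a * of_bool (ereal (sc' a) \<le> T))
      = (\<Sum>a\<in>insert (n + j) {1..n}. L a * of_bool (ereal (sc a) \<le> T))"
    using j sc' L' by (intro sum_permutes_cong[OF \<pi>]) auto
  then show ?thesis
    unfolding oracle_share_def Let_def T T_def[symmetric] using sc' L' k by (simp del: sum_mult_of_bool_eq)
qed

lemma oracle_share_cong: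
  assumes "j \<in> {1..m}" "k \<in> {1..n+m}"
    "\<And>i. i \<in> {1..n+m} \<Longrightarrow> sc' i = sc i" "\<And>i. i \<in> {1..n+m} \<Longrightarrow> L' i = L i"
  shows "oracle_share n m sc' L' \<gamma> j k = oracle_share n m sc L \<gamma> j k"
proof -
  have "oracle_share n m sc' L' \<gamma> j k = oracle_share n m sc L \<gamma> j (id k)"
    using assms by (intro oracle_share_permute permutes_id) auto
  then show ?thesis by simp
qed

lemma measurable_FR:
  assumes [measurable]: "\<And>i. (\<lambda>\<omega>. sc \<omega> i) \<in> borel_measurable N"
    "\<And>i. (\<lambda>\<omega>. L \<omega> i) \<in> borel_measurable N" "l \<in> borel_measurable N" "t \<in> borel_measurable N"
  shows "(\<lambda>\<omega>. FR n m (sc \<omega>) (L \<omega>) j (t \<omega>) (l \<omega>)) \<in> borel_measurable N"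
proof -
  have "{k \<in> {1..m}. P k} = {1..m} \<inter> {k. P k}" for P by blast
  then have "real (card {k \<in> {1..m}. P k}) = (\<Sum>k=1..m. of_bool (P k))" for P by simp
  then have "(\<lambda>\<omega>. FR n m (sc \<omega>) (L \<omega>) j (t \<omega>) (l \<omega>)) = (\<lambda>\<omega>.
      (l \<omega> * of_bool (sc \<omega> (n + j) \<le> t \<omega>) + (\<Sum>i=1..n. L \<omega> i * of_bool (sc \<omega> i \<le> t \<omega>)))
      / (1 + (\<Sum>k=1..m. of_bool (k \<noteq> j \<and> sc \<omega> (n + k) \<le> t \<omega>))) * (real m / real (n + 1)))"
    unfolding FR_def by presburger
  also have "\<dots> \<in> borel_measurable N" by measurable
  finally show ?thesis .
qed

lemma Max_image_if_ereal:
  fixes f :: "'a \<Rightarrow> real"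
  assumes "finite I" "I \<noteq> {}"
  shows "Max ((\<lambda>b. if P (f b) then ereal (f b) else -\<infinity>) ` I)
    = (let A = {t \<in> f ` I. P t} in if A = {} then -\<infinity> else ereal (Max A))"
proof -
  define A where "A = {t \<in> f ` I. P t}"
  have "finite A" unfolding A_def using assms(1) by simp
  show ?thesis
  proof (cases "A = {}")
    case True
    then have image: "(\<lambda>b. if P (f b) then ereal (f b) else -\<infinity>) ` I = {-\<infinity>}"
      using assms(2) unfolding A_def by auto
    show ?thesis unfolding image using True by (simp add: A_def[symmetric])
  next
    case False
    then have "Max A \<in> A" using \<open>finite A\<close> by simp
    then obtain b0 where "b0 \<in> I" "f b0 = Max A" "P (f b0)" unfolding A_def by auto
    moreover have "f b \<le> Max A" if "b \<in> I" "P (f b)" for b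
      using that \<open>finite A\<close> unfolding A_def by simp
    ultimately have "Max ((\<lambda>b. if P (f b) then ereal (f b) else -\<infinity>) ` I) = ereal (Max A)"
      using assms(1) by (intro Max_eqI) (auto simp: image_iff intro!: bexI[of _ b0])
    then show ?thesis using False unfolding A_def by simp
  qed
qed

lemma measurable_tgam:
  assumes [measurable]: "\<And>i. (\<lambda>\<omega>. sc \<omega> i) \<in> borel_measurable N"
    "\<And>i. (\<lambda>\<omega>. L \<omega> i) \<in> borel_measurable N" "l \<in> borel_measurable N"
  shows "(\<lambda>\<omega>. tgam n m (sc \<omega>) (L \<omega>) \<gamma> j (l \<omega>)) \<in> borel_measurable N"
proof (cases "n + m = 0")
  case True
  then show ?thesis unfolding tgam_def by simp
next
  case False
  have [measurable]: "(\<lambda>\<omega>. FR n m (sc \<omega>) (L \<omega>) j (sc \<omega> b) (l \<omega>)) \<in> borel_measurable N" for b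
    by (rule measurable_FR) auto
  have "(\<lambda>\<omega>. tgam n m (sc \<omega>) (L \<omega>) \<gamma> j (l \<omega>)) = (\<lambda>\<omega>. Max ((\<lambda>b.
      if FR n m (sc \<omega>) (L \<omega>) j (sc \<omega> b) (l \<omega>) \<le> \<gamma> then ereal (sc \<omega> b) else -\<infinity>) ` {1..n+m}))"
    using False by (subst Max_image_if_ereal) (auto simp: tgam_def)
  also have "\<dots> \<in> borel_measurable N" by measurable
  finally show ?thesis .
qed

lemma measurable_oracle_share:
  assumes [measurable]: "\<And>i. (\<lambda>\<omega>. sc \<omega> i) \<in> borel_measurable N"
    "\<And>i. (\<lambda>\<omega>. L \<omega> i) \<in> borel_measurable N"
  shows "(\<lambda>\<omega>. oracle_share n m (sc \<omega>) (L \<omega>) \<gamma> j k) \<in> borel_measurable N"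
proof -
  have [measurable]: "(\<lambda>\<omega>. tgam n m (sc \<omega>) (L \<omega>) \<gamma> j (L \<omega> (n + j))) \<in> borel_measurable N"
    by (rule measurable_tgam) auto
  show ?thesis unfolding oracle_share_def Let_def by measurable
qed

section \<open>FDR control under exchangeability\<close>

lemma eBH_fdp_le:
  fixes e L :: "nat \<Rightarrow> real" and m :: nat and \<alpha> :: real
  assumes \<alpha>: "0 < \<alpha>" and e: "\<And>j. 0 \<le> e j" and L: "\<And>j. 0 \<le> L j"
  defines "S \<equiv> eBH \<alpha> m (\<lambda>j. ereal (e j))"
  shows "(\<Sum>j\<in>S. L j) / max 1 (real (card S)) \<le> \<alpha> / real m * (\<Sum>j=1..m. L j * e j)"
proof (cases "eBH_tau \<alpha> m (\<lambda>j. ereal (e j)) = 0")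
  case True
  then show ?thesis
    using \<alpha> e L unfolding S_def eBH_def by (simp add: sum_nonneg)
next
  case False
  define \<tau> where "\<tau> = eBH_tau \<alpha> m (\<lambda>j. ereal (e j))"
  have S: "S = {j \<in> {1..m}. real m / (\<alpha> * real \<tau>) \<le> e j}"
    using False unfolding S_def eBH_def \<tau>_def Let_def by simp
  define A where "A = {\<tau> \<in> {1..m}. \<tau> \<le> card {j \<in> {1..m}. ereal (real m / (\<alpha> * real \<tau>)) \<le> ereal (e j)}}"
  have "A \<noteq> {}" "\<tau> = Max A"
    using False unfolding \<tau>_def eBH_tau_def Let_def A_def[symmetric] by (auto split: if_splits)
  moreover have "finite A" by (simp add: A_def)
  ultimately have "\<tau> \<in> A" using Max_in by blast
  then have \<tau>: "\<tau> \<in> {1..m}" "\<tau> \<le> card S" unfolding S A_def by auto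
  have select: "1 / real \<tau> \<le> \<alpha> * e j / real m" if "j \<in> S" for j
    using that \<tau>(1) \<alpha> unfolding S by (auto simp: field_simps)
  have "(\<Sum>j\<in>S. L j) / max 1 (real (card S)) \<le> (\<Sum>j\<in>S. L j) / real \<tau>"
    using \<tau> L by (intro divide_left_mono sum_nonneg) auto
  also have "\<dots> = (\<Sum>j\<in>S. L j * (1 / real \<tau>))" by (simp add: sum_divide_distrib)
  also have "\<dots> \<le> (\<Sum>j\<in>S. L j * (\<alpha> * e j / real m))"
    using select L by (intro sum_mono mult_left_mono) auto
  also have "\<dots> \<le> (\<Sum>j=1..m. L j * (\<alpha> * e j / real m))"
    using L e \<alpha> unfolding S by (intro sum_mono2) auto
  also have "\<dots> = \<alpha> / real m * (\<Sum>j=1..m. L j * e j)"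
    by (simp add: sum_distrib_left field_simps)
  finally show ?thesis .
qed

definition exchangeable :: "'w measure \<Rightarrow> 'z measure \<Rightarrow> 'i set \<Rightarrow> ('w \<Rightarrow> 'i \<Rightarrow> 'z) \<Rightarrow> bool" where
  "exchangeable M N I Z \<longleftrightarrow> (\<forall>\<pi>. \<pi> permutes I \<longrightarrow>
     distr M (PiM I (\<lambda>_. N)) (\<lambda>\<omega>. \<lambda>i\<in>I. Z \<omega> (\<pi> i)) = distr M (PiM I (\<lambda>_. N)) (\<lambda>\<omega>. \<lambda>i\<in>I. Z \<omega> i))"

lemma integral_exchangeable_permute:
  fixes f :: "('i \<Rightarrow> 'z) \<Rightarrow> real"
  assumes Z: "\<And>i. i \<in> I \<Longrightarrow> (\<lambda>\<omega>. Z \<omega> i) \<in> M \<rightarrow>\<^sub>M N"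
    and exch: "exchangeable M N I Z" and \<pi>: "\<pi> permutes I"
    and f: "f \<in> borel_measurable (PiM I (\<lambda>_. N))"
  shows "(\<integral>\<omega>. f (\<lambda>i\<in>I. Z \<omega> (\<pi> i)) \<partial>M) = (\<integral>\<omega>. f (\<lambda>i\<in>I. Z \<omega> i) \<partial>M)"
proof -
  have Z\<pi>: "(\<lambda>\<omega>. \<lambda>i\<in>I. Z \<omega> (\<pi> i)) \<in> M \<rightarrow>\<^sub>M PiM I (\<lambda>_. N)"
    using Z permutes_in_image[OF \<pi>] by (intro measurable_restrict) auto
  have Z_id: "(\<lambda>\<omega>. \<lambda>i\<in>I. Z \<omega> i) \<in> M \<rightarrow>\<^sub>M PiM I (\<lambda>_. N)"
    using Z by (intro measurable_restrict) auto
  have "(\<integral>\<omega>. f (\<lambda>i\<in>I. Z \<omega> (\<pi> i)) \<partial>M) = integral\<^sup>L (distr M (PiM I (\<lambda>_. N)) (\<lambda>\<omega>. \<lambda>i\<in>I. Z \<omega> (\<pi> i))) f"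
    using integral_distr[OF Z\<pi> f] by simp
  also have "\<dots> = integral\<^sup>L (distr M (PiM I (\<lambda>_. N)) (\<lambda>\<omega>. \<lambda>i\<in>I. Z \<omega> i)) f"
    using exch \<pi> unfolding exchangeable_def by (intro arg_cong[where f = "\<lambda>P. integral\<^sup>L P f"]) blast
  also have "\<dots> = (\<integral>\<omega>. f (\<lambda>i\<in>I. Z \<omega> i) \<partial>M)"
    using integral_distr[OF Z_id f] by simp
  finally show ?thesis .
qed

lemma measurable_PiM_component_comp:
  assumes "g \<in> borel_measurable N"
  shows "(\<lambda>z. g (z i)) \<in> borel_measurable (PiM I (\<lambda>_. N))"
proof (cases "i \<in> I")
  case True
  show ?thesis by (rule measurable_compose[OF measurable_component_singleton[OF True] assms])
next
  case False
  have "g (z i) = g undefined" if "z \<in> space (PiM I (\<lambda>_. N))" for z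
    using PiE_arb[OF that[unfolded space_PiM] False] by (rule arg_cong)
  then show ?thesis
    using measurable_cong[of "PiM I (\<lambda>_. N)" "\<lambda>z. g (z i)" "\<lambda>_. g undefined"] borel_measurable_const
    by blast
qed

lemma measurable_oracle_share_PiM:
  assumes "sc \<in> borel_measurable N" "loss \<in> borel_measurable N"
  shows "(\<lambda>z. oracle_share n m (\<lambda>i. sc (z i)) (\<lambda>i. loss (z i)) \<gamma> j k) \<in> borel_measurable (PiM I (\<lambda>_. N))"
  using measurable_PiM_component_comp[OF assms(1)] measurable_PiM_component_comp[OF assms(2)]
  by (rule measurable_oracle_share)

lemma integrable_oracle_share_data:
  fixes Z :: "'w \<Rightarrow> nat \<Rightarrow> 'z" and sc loss :: "'z \<Rightarrow> real"
  assumes M: "finite_measure M"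
    and Z: "\<And>i. i \<in> {1..n+m} \<Longrightarrow> (\<lambda>\<omega>. Z \<omega> i) \<in> M \<rightarrow>\<^sub>M N"
    and sc: "sc \<in> borel_measurable N" and loss: "loss \<in> borel_measurable N"
    and loss_nonneg: "\<And>z. 0 \<le> loss z"
    and j: "j \<in> {1..m}" and k: "k \<in> insert (n + j) {1..n}"
  shows "integrable M (\<lambda>\<omega>. oracle_share n m (\<lambda>i. sc (Z \<omega> i)) (\<lambda>i. loss (Z \<omega> i)) \<gamma> j k)"
proof (rule finite_measure.integrable_const_bound[OF M, where B = 1])
  \<comment> \<open>Only the coordinates in \<open>I\<close> are measurable, so pass through the restricted vector.\<close>
  define I where "I = {1..n+m}"
  define \<Phi> where "\<Phi> z = oracle_share n m (\<lambda>i. sc (z i)) (\<lambda>i. loss (z i)) \<gamma> j k" for z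
  have "\<Phi> \<in> borel_measurable (PiM I (\<lambda>_. N))"
    unfolding \<Phi>_def using sc loss by (rule measurable_oracle_share_PiM)
  moreover have "(\<lambda>\<omega>. \<lambda>i\<in>I. Z \<omega> i) \<in> M \<rightarrow>\<^sub>M PiM I (\<lambda>_. N)"
    using Z unfolding I_def by (intro measurable_restrict) auto
  moreover have "\<Phi> (\<lambda>i\<in>I. Z \<omega> i) = oracle_share n m (\<lambda>i. sc (Z \<omega> i)) (\<lambda>i. loss (Z \<omega> i)) \<gamma> j k" for \<omega>
    unfolding \<Phi>_def I_def using j k by (intro oracle_share_cong) auto
  ultimately show "(\<lambda>\<omega>. oracle_share n m (\<lambda>i. sc (Z \<omega> i)) (\<lambda>i. loss (Z \<omega> i)) \<gamma> j k) \<in> borel_measurable M"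
    using measurable_compose[of "\<lambda>\<omega>. \<lambda>i\<in>I. Z \<omega> i" M _ \<Phi>] by simp
  show "AE \<omega> in M. norm (oracle_share n m (\<lambda>i. sc (Z \<omega> i)) (\<lambda>i. loss (Z \<omega> i)) \<gamma> j k) \<le> 1"
    using oracle_share_bounds[OF loss_nonneg k] by simp
qed

lemma expected_oracle_share_le:
  fixes Z :: "'w \<Rightarrow> nat \<Rightarrow> 'z" and sc loss :: "'z \<Rightarrow> real"
  assumes M: "prob_space M"
    and Z: "\<And>i. i \<in> {1..n+m} \<Longrightarrow> (\<lambda>\<omega>. Z \<omega> i) \<in> M \<rightarrow>\<^sub>M N"
    and exch: "exchangeable M N {1..n+m} Z"
    and sc: "sc \<in> borel_measurable N" and loss: "loss \<in> borel_measurable N"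
    and loss_nonneg: "\<And>z. 0 \<le> loss z"
    and j: "j \<in> {1..m}"
  shows "real (n + 1) * (\<integral>\<omega>. oracle_share n m (\<lambda>i. sc (Z \<omega> i)) (\<lambda>i. loss (Z \<omega> i)) \<gamma> j (n + j) \<partial>M) \<le> 1"
proof -
  interpret prob_space M by (rule M)
  define I where "I = {1..n+m}"
  define D where "D = insert (n + j) {1..n}"
  define share where "share k \<omega> = oracle_share n m (\<lambda>i. sc (Z \<omega> i)) (\<lambda>i. loss (Z \<omega> i)) \<gamma> j k" for k \<omega>
  define \<Phi> where "\<Phi> z = oracle_share n m (\<lambda>i. sc (z i)) (\<lambda>i. loss (z i)) \<gamma> j (n + j)" for z
  have D_I: "D \<subseteq> I" using j unfolding D_def I_def by auto
  have share_int: "integrable M (share k)" if "k \<in> D" for k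
    unfolding share_def using finite_measure_axioms Z sc loss loss_nonneg j that[unfolded D_def]
    by (rule integrable_oracle_share_data)
  have exchange: "(\<integral>\<omega>. share i \<omega> \<partial>M) = (\<integral>\<omega>. share (n + j) \<omega> \<partial>M)" if i: "i \<in> {1..n}" for i
  proof -
    define \<pi> where "\<pi> = Transposition.transpose i (n + j)"
    have \<pi>: "\<pi> permutes D" unfolding \<pi>_def D_def using i by (intro permutes_swap_id) auto
    have "\<Phi> (\<lambda>k\<in>I. Z \<omega> (\<pi> k)) = share (\<pi> (n + j)) \<omega>" for \<omega>
      unfolding \<Phi>_def share_def using \<pi> j unfolding I_def D_def
      by (intro oracle_share_permute) auto
    then have "(\<integral>\<omega>. share i \<omega> \<partial>M) = (\<integral>\<omega>. \<Phi> (\<lambda>k\<in>I. Z \<omega> (\<pi> k)) \<partial>M)"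
      unfolding \<pi>_def by simp
    also have "\<dots> = (\<integral>\<omega>. \<Phi> (\<lambda>k\<in>I. Z \<omega> k) \<partial>M)"
    proof (rule integral_exchangeable_permute)
      show "\<Phi> \<in> borel_measurable (PiM I (\<lambda>_. N))"
        unfolding \<Phi>_def using sc loss by (rule measurable_oracle_share_PiM)
    qed (use Z exch permutes_subset[OF \<pi> D_I] in \<open>auto simp: I_def\<close>)
    also have "\<dots> = (\<integral>\<omega>. share (n + j) \<omega> \<partial>M)"
      unfolding \<Phi>_def share_def I_def using j by (intro Bochner_Integration.integral_cong oracle_share_cong) auto
    finally show ?thesis .
  qed
  have "real (n + 1) * (\<integral>\<omega>. share (n + j) \<omega> \<partial>M) = (\<Sum>k\<in>D. (\<integral>\<omega>. share k \<omega> \<partial>M))"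
    using j exchange unfolding D_def by (simp add: algebra_simps)
  also have "\<dots> = (\<integral>\<omega>. (\<Sum>k\<in>D. share k \<omega>) \<partial>M)"
    using share_int by (simp add: Bochner_Integration.integral_sum)
  also have "\<dots> \<le> (\<integral>\<omega>. 1 \<partial>M)"
    using share_int sum_oracle_share_le_1 unfolding share_def D_def by (intro integral_mono) auto
  finally show ?thesis unfolding share_def by (simp add: prob_space)
qed

lemma fdr_eBH_Eval_one_le:
  fixes Z :: "'w \<Rightarrow> nat \<Rightarrow> 'z" and sc :: "'z \<Rightarrow> real" and risk :: "'z \<Rightarrow> bool"
    and n m :: nat and \<gamma> \<alpha> :: real and L :: "'w \<Rightarrow> nat \<Rightarrow> real" and S :: "'w \<Rightarrow> nat set"
  assumes M: "prob_space M"
    and Z: "\<And>i. i \<in> {1..n+m} \<Longrightarrow> (\<lambda>\<omega>. Z \<omega> i) \<in> M \<rightarrow>\<^sub>M N"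
    and exch: "exchangeable M N {1..n+m} Z"
    and sc: "sc \<in> borel_measurable N" and risk: "Measurable.pred N risk"
    and \<alpha>: "0 < \<alpha>"
  defines "L \<omega> i \<equiv> of_bool (risk (Z \<omega> i))"
    and "S \<omega> \<equiv> eBH \<alpha> m (\<lambda>j. Eval n m (\<lambda>i. sc (Z \<omega> i)) (L \<omega>) \<gamma> j 1)"
  shows "(\<integral>\<omega>. (\<Sum>j\<in>S \<omega>. L \<omega> (n + j)) / max 1 (real (card (S \<omega>))) \<partial>M) \<le> \<alpha>"
proof -
  interpret prob_space M by (rule M)
  have loss: "(\<lambda>z. of_bool (risk z) :: real) \<in> borel_measurable N" using risk by measurable
  have L: "0 \<le> L \<omega> i" "L \<omega> i \<in> {0, 1}" for \<omega> i unfolding L_def by auto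
  define share where "share j \<omega> = oracle_share n m (\<lambda>i. sc (Z \<omega> i)) (L \<omega>) \<gamma> j (n + j)" for j \<omega>
  define e where "e \<omega> j = real_of_ereal (Eval n m (\<lambda>i. sc (Z \<omega> i)) (L \<omega>) \<gamma> j 1)" for \<omega> j
  define B where "B \<omega> = \<alpha> / real m * (\<Sum>j=1..m. real (n + 1) * share j \<omega>)" for \<omega>
  have share_int: "integrable M (share j)" if "j \<in> {1..m}" for j
    unfolding share_def L_def using finite_measure_axioms Z sc loss _ that
    by (rule integrable_oracle_share_data) auto
  have fdp_le_B: "(\<Sum>j\<in>S \<omega>. L \<omega> (n + j)) / max 1 (real (card (S \<omega>))) \<le> B \<omega>" for \<omega>
  proof -
    have "S \<omega> = eBH \<alpha> m (\<lambda>j. ereal (e \<omega> j))"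
      unfolding S_def e_def using Eval_one_nonneg_real(1)[of "L \<omega>", OF L(1)] by simp
    moreover have "L \<omega> (n + j) * e \<omega> j = real (n + 1) * share j \<omega>" if "j \<in> {1..m}" for j
      unfolding e_def share_def using that by (intro risk_mult_Eval_one L) auto
    ultimately show ?thesis
      using eBH_fdp_le[of \<alpha> "e \<omega>" "\<lambda>j. L \<omega> (n + j)" m] \<alpha> L(1) Eval_one_nonneg_real(2)[of "L \<omega>", OF L(1)]
      unfolding B_def e_def by simp
  qed
  have "(\<integral>\<omega>. B \<omega> \<partial>M) = \<alpha> / real m * (\<Sum>j=1..m. real (n + 1) * (\<integral>\<omega>. share j \<omega> \<partial>M))"
    unfolding B_def using share_int by (simp add: Bochner_Integration.integral_sum)
  also have "\<dots> \<le> \<alpha> / real m * (\<Sum>j=1..m. 1)"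
    using \<alpha> expected_oracle_share_le[OF M Z exch sc loss] unfolding share_def L_def
    by (intro mult_left_mono sum_mono) auto
  also have "\<dots> \<le> \<alpha>" using \<alpha> by simp
  finally have "(\<integral>\<omega>. B \<omega> \<partial>M) \<le> \<alpha>" .
  moreover have "integrable M B"
    unfolding B_def using share_int by (intro integrable_mult_right integrable_sum) auto
  \<comment> \<open>A non-integrable FDP has integral 0.\<close>
  ultimately show ?thesis
    using fdp_le_B \<alpha> integral_mono not_integrable_integral_eq by (smt (verit))
qed

theorem corollary5p1:
  fixes M :: "'w measure" and MX :: "'x measure"
    and X :: "'w \<Rightarrow> nat \<Rightarrow> 'x" and Y :: "'w \<Rightarrow> nat \<Rightarrow> real"
    and s :: "'x \<Rightarrow> real" and c \<gamma> \<alpha> :: real and n m :: nat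
    and L :: "'w \<Rightarrow> nat \<Rightarrow> real" and Sp SCS :: "'w \<Rightarrow> nat set"
  assumes prob: "prob_space M"
    and meas: "\<forall>i\<in>{1..n+m}. (\<lambda>\<omega>. (X \<omega> i, Y \<omega> i)) \<in> M \<rightarrow>\<^sub>M (MX \<Otimes>\<^sub>M borel)"
    and exch: "\<forall>\<pi>. \<pi> permutes {1..n+m} \<longrightarrow>
       distr M (PiM {1..n+m} (\<lambda>_. MX \<Otimes>\<^sub>M borel)) (\<lambda>\<omega>. \<lambda>i\<in>{1..n+m}. (X \<omega> (\<pi> i), Y \<omega> (\<pi> i)))
       = distr M (PiM {1..n+m} (\<lambda>_. MX \<Otimes>\<^sub>M borel)) (\<lambda>\<omega>. \<lambda>i\<in>{1..n+m}. (X \<omega> i, Y \<omega> i))"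
    and s_meas: "s \<in> MX \<rightarrow>\<^sub>M borel"
    and s_range: "\<forall>x\<in>space MX. 0 \<le> s x \<and> s x \<le> 1"
    and gam: "\<gamma> > 0"
    and alpha: "0 < \<alpha>" "\<alpha> < 1"
    and L_def: "L = (\<lambda>\<omega> i. of_bool (Y \<omega> i \<le> c))"
    and Sp_def: "Sp = (\<lambda>\<omega>. eBH \<alpha> m (\<lambda>j. Eval n m (\<lambda>i. s (X \<omega> i)) (L \<omega>) \<gamma> j 1))"
    and SCS_def: "SCS = (\<lambda>\<omega>. BH \<alpha> m (\<lambda>j. conf_pval n s c (X \<omega>) (Y \<omega>) j))"
  shows "(\<integral>\<omega>. (\<Sum>j\<in>Sp \<omega>. L \<omega> (n + j)) / max 1 (real (card (Sp \<omega>))) \<partial>M) \<le> \<alpha>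
         \<and> (\<gamma> = \<alpha> \<longrightarrow> (\<forall>\<omega>\<in>space M. Sp \<omega> = SCS \<omega>))"
proof
  have L_nonneg: "\<And>i. 0 \<le> L \<omega> i" for \<omega> unfolding L_def by simp
  have "exchangeable M (MX \<Otimes>\<^sub>M borel) {1..n+m} (\<lambda>\<omega> i. (X \<omega> i, Y \<omega> i))"
    unfolding exchangeable_def by (rule exch)
  from fdr_eBH_Eval_one_le[OF prob _ this _ _ alpha(1), of "\<lambda>z. s (fst z)" "\<lambda>z. snd z \<le> c"]
  show "(\<integral>\<omega>. (\<Sum>j\<in>Sp \<omega>. L \<omega> (n + j)) / max 1 (real (card (Sp \<omega>))) \<partial>M) \<le> \<alpha>"
    using meas s_meas unfolding Sp_def L_def by simp
  show "\<gamma> = \<alpha> \<longrightarrow> (\<forall>\<omega>\<in>space M. Sp \<omega> = SCS \<omega>)"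
  proof (intro impI ballI)
    fix \<omega> assume "\<gamma> = \<alpha>"
    have "Sp \<omega> = eBH \<alpha> m (\<lambda>j. Eval n m (\<lambda>i. s (X \<omega> i)) (L \<omega>) \<alpha> j 1)"
      unfolding Sp_def \<open>\<gamma> = \<alpha>\<close> ..
    also have "\<dots> = BH \<alpha> m (\<lambda>j. (1 + calib_risk n (\<lambda>i. s (X \<omega> i)) (L \<omega>) (s (X \<omega> (n + j)))) / real (n + 1))"
      using eBH_Eval_one_eq[where sc = "\<lambda>i. s (X \<omega> i)", OF L_nonneg alpha(1)]
        BH_calib_pval_eq[where sc = "\<lambda>i. s (X \<omega> i)", OF L_nonneg less_imp_le[OF alpha(1)]]
      by simp
    also have "\<dots> = SCS \<omega>"
      unfolding SCS_def conf_pval_eq L_def ..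
    finally show "Sp \<omega> = SCS \<omega>" .
  qed
qed

end
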